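(* Let $\boldsymbol{y},\boldsymbol{x}\in\mathbb{R}^n$ and let $\boldsymbol{Z}=[\boldsymbol{z}_1\ \cdots\ \boldsymbol{z}_{k_z}]$ be an $n\times k_z$ matrix of full column rank, with $\boldsymbol{x}^T\boldsymbol{P}_Z\boldsymbol{x}\neq0$, $\boldsymbol{z}_\ell^T\boldsymbol{x}\neq0$ and $\boldsymbol{z}_{\ell|\{-\ell\}}^T\boldsymbol{x}\neq 0$ for all $\ell$. Let $\hat{\boldsymbol{\pi}}=(\boldsymbol{Z}^T\boldsymbol{Z})^{-1}\boldsymbol{Z}^T\boldsymbol{x}$ and $w_\ell=\hat\pi_\ell\,\boldsymbol{z}_\ell^T\boldsymbol{x}\,(\boldsymbol{x}^T\boldsymbol{P}_Z\boldsymbol{x})^{-1}$. Then $\sum_{\ell=1}^{k_z}w_\ell=1$ and $$\hat\beta_{2sls}=\sum_{\ell=1}^{k_z}w_\ell\hat\beta_\ell=\sum_{\ell=1}^{k_z}w_\ell\hat\beta^*_\ell .$$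
   Context: $\boldsymbol{P}_A=\boldsymbol{A}(\boldsymbol{A}^T\boldsymbol{A})^{-1}\boldsymbol{A}^T$, $\boldsymbol{M}_A=\boldsymbol{I}_n-\boldsymbol{P}_A$. $\hat\beta_{2sls}=(\boldsymbol{x}^T\boldsymbol{P}_Z\boldsymbol{x})^{-1}\boldsymbol{x}^T\boldsymbol{P}_Z\boldsymbol{y}$. $\boldsymbol{Z}_{\{-\ell\}}$ is $\boldsymbol{Z}$ with column $\boldsymbol{z}_\ell$ removed, $\boldsymbol{z}_{\ell|\{-\ell\}}=\boldsymbol{M}_{Z_{\{-\ell\}}}\boldsymbol{z}_\ell$, $\hat\beta_\ell=\boldsymbol{z}_{\ell|\{-\ell\}}^T\boldsymbol{y}/\boldsymbol{z}_{\ell|\{-\ell\}}^T\boldsymbol{x}$ (the just-identified IV estimator with $\boldsymbol{z}_\ell$ as instrument and the other instruments as controls), and $\hat\beta^*_\ell=\boldsymbol{z}_\ell^T\boldsymbol{y}/\boldsymbol{z}_\ell^T\boldsymbol{x}$ (the just-identified IV estimator with $\boldsymbol{z}_\ell$ as sole instrument and the others omitted). *)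

theory Defs
  imports "Jordan_Normal_Form.DL_Rank" "Jordan_Normal_Form.Gauss_Jordan_Elimination"
begin

definition minv :: "real mat \<Rightarrow> real mat" where
  "minv A = (case mat_inverse A of Some B \<Rightarrow> B | None \<Rightarrow> 0\<^sub>m (dim_row A) (dim_col A))"

definition proj_mat :: "real mat \<Rightarrow> real mat" where
  "proj_mat A = A * minv (A\<^sup>T * A) * A\<^sup>T"

definition annih_mat :: "real mat \<Rightarrow> real mat" where
  "annih_mat A = 1\<^sub>m (dim_row A) - proj_mat A"

text \<open>Z_{-l}: Z with column l (0-based) removed\<close>
definition drop_col :: "real mat \<Rightarrow> nat \<Rightarrow> real mat" where
  "drop_col A l = mat_of_cols (dim_row A) [col A j. j \<leftarrow> [0..<dim_col A], j \<noteq> l]"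

definition z_part :: "real mat \<Rightarrow> nat \<Rightarrow> real vec" where
  "z_part Z l = annih_mat (drop_col Z l) *\<^sub>v col Z l"

definition beta_2sls :: "real mat \<Rightarrow> real vec \<Rightarrow> real vec \<Rightarrow> real" where
  "beta_2sls Z x y = (x \<bullet> (proj_mat Z *\<^sub>v y)) / (x \<bullet> (proj_mat Z *\<^sub>v x))"

definition beta_l :: "real mat \<Rightarrow> real vec \<Rightarrow> real vec \<Rightarrow> nat \<Rightarrow> real" where
  "beta_l Z x y l = (z_part Z l \<bullet> y) / (z_part Z l \<bullet> x)"

definition beta_star :: "real mat \<Rightarrow> real vec \<Rightarrow> real vec \<Rightarrow> nat \<Rightarrow> real" where
  "beta_star Z x y l = (col Z l \<bullet> y) / (col Z l \<bullet> x)"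

definition pi_hat :: "real mat \<Rightarrow> real vec \<Rightarrow> real vec" where
  "pi_hat Z x = minv (Z\<^sup>T * Z) *\<^sub>v (Z\<^sup>T *\<^sub>v x)"

definition weight :: "real mat \<Rightarrow> real vec \<Rightarrow> nat \<Rightarrow> real" where
  "weight Z x l = (pi_hat Z x $ l) * (col Z l \<bullet> x) / (x \<bullet> (proj_mat Z *\<^sub>v x))"

end

theory Submission imports Defs begin

(* Write pi(w) = (Z^T Z)^-1 Z^T w for the OLS coefficients of w on Z. Then
   x^T P_Z w = (Z^T x) . pi(w), and this form is symmetric in x and w. So the weights
   w_l = pi(x)_l z_l^T x / x^T P_Z x sum to 1, and w_l beta*_l = pi(x)_l z_l^T y / x^T P_Z x
   sums to beta_2sls. For beta_l one uses the Frisch-Waugh-Lovell identity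
   z_{l|-l}^T w = pi(w)_l z_l^T z_{l|-l}: the partialled-out instrument is orthogonal to
   every other column of Z and lies in the column space of Z, so it only detects the l-th
   coefficient of the fit of w on Z. Hence w_l beta_l = z_l^T x pi(y)_l / x^T P_Z x, which
   again sums to beta_2sls. *)

(* The library's non_distinct_low_rank, without the restriction to square matrices. *)
lemma (in vec_space) non_distinct_cols_low_rank:
  assumes A: "A \<in> carrier_mat n nc" and "\<not> distinct (cols A)"
  shows "rank A < nc"
proof -
  obtain S where S: "maximal S (\<lambda>T. T \<subseteq> set (cols A) \<and> lin_indpt T)"
    using maximal_exists[of "\<lambda>T. T \<subseteq> set (cols A) \<and> lin_indpt T" "card (set (cols A))" "{}"]
    by (meson List.finite_set card_mono empty_iff empty_subsetI finite_lin_indpt2 rev_finite_subset)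
  then have "card S \<le> card (set (cols A))" by (simp add: card_mono maximal_def)
  also have "\<dots> < nc"
    using A \<open>\<not> distinct (cols A)\<close> card_distinct card_length[of "cols A"]
    by (metis carrier_matD(2) cols_length le_neq_implies_less)
  finally show ?thesis using rank_card_indpt[OF A S] by simp
qed

lemma full_rank_mult_vec_eq_0:
  fixes A :: "'a :: field mat"
  assumes A: "A \<in> carrier_mat n nc" and rank: "vec_space.rank n A = nc"
    and v: "v \<in> carrier_vec nc" and Av: "A *\<^sub>v v = 0\<^sub>v n"
  shows "v = 0\<^sub>v nc"
proof (rule ccontr)
  interpret vec_space "TYPE('a)" n .
  assume "v \<noteq> 0\<^sub>v nc"
  have "distinct (cols A)" using non_distinct_cols_low_rank[OF A] rank by fastforce
  then show False
    using lin_depI[OF A v \<open>v \<noteq> 0\<^sub>v nc\<close> Av] full_rank_lin_indpt[OF A rank] by blast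
qed

lemma minv_carrier:
  assumes "B \<in> carrier_mat n n"
  shows "minv B \<in> carrier_mat n n"
  using assms mat_inverse(2)[OF assms] unfolding minv_def by (auto split: option.split)

lemma mult_minv:
  assumes B: "B \<in> carrier_mat n n" and det: "det B \<noteq> 0"
  shows "B * minv B = 1\<^sub>m n"
proof -
  have "B \<in> Units (ring_mat TYPE(real) n ())" using det_non_zero_imp_unit[OF B det] .
  then obtain C where "mat_inverse B = Some C" using mat_inverse(1)[OF B] by fastforce
  then show ?thesis using mat_inverse(2)[OF B] unfolding minv_def by simp
qed

lemma transpose_minv:
  assumes B: "B \<in> carrier_mat n n" and det: "det B \<noteq> 0" and sym: "B\<^sup>T = B"
  shows "(minv B)\<^sup>T = minv B"
proof -
  define C where "C = minv B"
  have C: "C \<in> carrier_mat n n" and BC: "B * C = 1\<^sub>m n"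
    unfolding C_def using minv_carrier[OF B] mult_minv[OF B det] by auto
  have "C\<^sup>T * B = (B * C)\<^sup>T" using transpose_mult[OF B C] sym by simp
  then have CB: "C\<^sup>T * B = 1\<^sub>m n" using BC by simp
  have "C\<^sup>T = C\<^sup>T * (B * C)" using BC C by simp
  also have "\<dots> = (C\<^sup>T * B) * C" using B C by (simp add: assoc_mult_mat[of _ n n])
  also have "\<dots> = C" using CB C by simp
  finally show ?thesis unfolding C_def .
qed

lemma det_gram_mat_neq_0:
  fixes A :: "real mat"
  assumes A: "A \<in> carrier_mat n m"
    and ker: "\<And>v. v \<in> carrier_vec m \<Longrightarrow> A *\<^sub>v v = 0\<^sub>v n \<Longrightarrow> v = 0\<^sub>v m"
  shows "det (A\<^sup>T * A) \<noteq> 0"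
proof
  assume "det (A\<^sup>T * A) = 0"
  then obtain v where v: "v \<in> carrier_vec m" "v \<noteq> 0\<^sub>v m" "(A\<^sup>T * A) *\<^sub>v v = 0\<^sub>v m"
    using det_0_iff_vec_prod_zero_field[of "A\<^sup>T * A" m] A by auto
  have "(A *\<^sub>v v) \<bullet> (A *\<^sub>v v) = ((A\<^sup>T * A) *\<^sub>v v) \<bullet> v"
    using transpose_vec_mult_scalar[OF A v(1), of "A *\<^sub>v v"] A v(1) by auto
  also have "\<dots> = 0" using v by simp
  finally have "A *\<^sub>v v = 0\<^sub>v n" using conjugate_square_eq_0_vec[of "A *\<^sub>v v" n] A v(1) by simp
  then show False using ker v by blast
qed

lemma minv_gram_mat:
  fixes A :: "real mat"
  assumes A: "A \<in> carrier_mat n m"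
    and ker: "\<And>v. v \<in> carrier_vec m \<Longrightarrow> A *\<^sub>v v = 0\<^sub>v n \<Longrightarrow> v = 0\<^sub>v m"
  shows "(A\<^sup>T * A) * minv (A\<^sup>T * A) = 1\<^sub>m m" and "(minv (A\<^sup>T * A))\<^sup>T = minv (A\<^sup>T * A)"
proof -
  have G: "A\<^sup>T * A \<in> carrier_mat m m" using A by auto
  have "(A\<^sup>T * A)\<^sup>T = A\<^sup>T * A" using transpose_mult[of "A\<^sup>T" m n A m] A by simp
  then show "(A\<^sup>T * A) * minv (A\<^sup>T * A) = 1\<^sub>m m" and "(minv (A\<^sup>T * A))\<^sup>T = minv (A\<^sup>T * A)"
    using mult_minv[OF G] transpose_minv[OF G] det_gram_mat_neq_0[OF A ker] by auto
qed

lemma pi_hat_carrier: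
  assumes A: "A \<in> carrier_mat n m" and w: "w \<in> carrier_vec n"
  shows "pi_hat A w \<in> carrier_vec m"
  unfolding pi_hat_def using minv_carrier[of "A\<^sup>T * A" m] A w by auto

lemma proj_mat_mult_vec:
  assumes A: "A \<in> carrier_mat n m" and w: "w \<in> carrier_vec n"
  shows "proj_mat A *\<^sub>v w = A *\<^sub>v pi_hat A w"
proof -
  have G: "minv (A\<^sup>T * A) \<in> carrier_mat m m" using minv_carrier[of "A\<^sup>T * A" m] A by auto
  have AT: "A\<^sup>T \<in> carrier_mat m n" using A by auto
  show ?thesis
    unfolding proj_mat_def pi_hat_def using A G AT w
    by (simp add: assoc_mult_mat_vec[of _ n m _ m] assoc_mult_mat_vec[of _ n m _ n])
qed

lemma annih_mat_mult_vec:
  assumes A: "A \<in> carrier_mat n m" and w: "w \<in> carrier_vec n"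
  shows "annih_mat A *\<^sub>v w = w - A *\<^sub>v pi_hat A w"
proof -
  have "proj_mat A \<in> carrier_mat n n"
    unfolding proj_mat_def using minv_carrier[of "A\<^sup>T * A" m] A by auto
  then show ?thesis
    unfolding annih_mat_def using A w proj_mat_mult_vec[OF A w]
    by (simp add: minus_mult_distrib_mat_vec[of "1\<^sub>m n" n n])
qed

lemma scalar_prod_proj_mat:
  assumes A: "A \<in> carrier_mat n m" and x: "x \<in> carrier_vec n" and w: "w \<in> carrier_vec n"
  shows "x \<bullet> (proj_mat A *\<^sub>v w) = (A\<^sup>T *\<^sub>v x) \<bullet> pi_hat A w"
  using transpose_vec_mult_scalar[OF A pi_hat_carrier[OF A w] x] proj_mat_mult_vec[OF A w] by simp

lemma gram_mat_mult_pi_hat: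
  fixes A :: "real mat"
  assumes A: "A \<in> carrier_mat n m" and w: "w \<in> carrier_vec n"
    and ker: "\<And>v. v \<in> carrier_vec m \<Longrightarrow> A *\<^sub>v v = 0\<^sub>v n \<Longrightarrow> v = 0\<^sub>v m"
  shows "(A\<^sup>T * A) *\<^sub>v pi_hat A w = A\<^sup>T *\<^sub>v w"
proof -
  have G: "A\<^sup>T * A \<in> carrier_mat m m" using A by auto
  have "(A\<^sup>T * A) *\<^sub>v pi_hat A w = ((A\<^sup>T * A) * minv (A\<^sup>T * A)) *\<^sub>v (A\<^sup>T *\<^sub>v w)"
    unfolding pi_hat_def
    by (rule assoc_mult_mat_vec[OF G minv_carrier[OF G], symmetric]) (use A w in auto)
  then show ?thesis using minv_gram_mat(1)[OF A ker] A w by simp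
qed

lemma transpose_mult_annih_mat_vec:
  fixes A :: "real mat"
  assumes A: "A \<in> carrier_mat n m" and w: "w \<in> carrier_vec n"
    and ker: "\<And>v. v \<in> carrier_vec m \<Longrightarrow> A *\<^sub>v v = 0\<^sub>v n \<Longrightarrow> v = 0\<^sub>v m"
  shows "A\<^sup>T *\<^sub>v (annih_mat A *\<^sub>v w) = 0\<^sub>v m"
proof -
  have AT: "A\<^sup>T \<in> carrier_mat m n" using A by auto
  have p: "pi_hat A w \<in> carrier_vec m" using pi_hat_carrier[OF A w] .
  have "A\<^sup>T *\<^sub>v (annih_mat A *\<^sub>v w) = A\<^sup>T *\<^sub>v w - (A\<^sup>T * A) *\<^sub>v pi_hat A w"
    unfolding annih_mat_mult_vec[OF A w] using AT A w p
    by (simp add: mult_minus_distrib_mat_vec assoc_mult_mat_vec[of _ m n _ m])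
  then show ?thesis using gram_mat_mult_pi_hat[OF A w ker] AT w by simp
qed

lemma scalar_prod_pi_hat_comm:
  fixes A :: "real mat"
  assumes A: "A \<in> carrier_mat n m" and x: "x \<in> carrier_vec n" and y: "y \<in> carrier_vec n"
    and ker: "\<And>v. v \<in> carrier_vec m \<Longrightarrow> A *\<^sub>v v = 0\<^sub>v n \<Longrightarrow> v = 0\<^sub>v m"
  shows "(A\<^sup>T *\<^sub>v y) \<bullet> pi_hat A x = (A\<^sup>T *\<^sub>v x) \<bullet> pi_hat A y"
proof -
  define G where "G = minv (A\<^sup>T * A)"
  have G: "G \<in> carrier_mat m m" unfolding G_def using minv_carrier[of "A\<^sup>T * A" m] A by auto
  have GT: "G\<^sup>T = G" unfolding G_def using minv_gram_mat(2)[OF A ker] .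
  have "(A\<^sup>T *\<^sub>v y) \<bullet> pi_hat A x = (G\<^sup>T *\<^sub>v (A\<^sup>T *\<^sub>v y)) \<bullet> (A\<^sup>T *\<^sub>v x)"
    unfolding pi_hat_def G_def[symmetric]
    using transpose_vec_mult_scalar[OF G, of "A\<^sup>T *\<^sub>v x" "A\<^sup>T *\<^sub>v y"] A x y by simp
  also have "\<dots> = (A\<^sup>T *\<^sub>v x) \<bullet> pi_hat A y"
    unfolding GT pi_hat_def G_def[symmetric]
    using comm_scalar_prod[of "A\<^sup>T *\<^sub>v x" m] G A x y by simp
  finally show ?thesis .
qed

definition skip_index :: "nat \<Rightarrow> nat \<Rightarrow> nat" where
  "skip_index l j = (if j < l then j else Suc j)"

definition skip_mat :: "nat \<Rightarrow> nat \<Rightarrow> real mat" where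
  "skip_mat k l = mat k (k - 1) (\<lambda>(i, j). if i = skip_index l j then 1 else 0)"

lemma skip_index_less: "j < k - 1 \<Longrightarrow> skip_index l j < k"
  unfolding skip_index_def by auto

lemma filter_upt_neq:
  assumes "l < k"
  shows "filter (\<lambda>j. j \<noteq> l) [0..<k] = [0..<l] @ [Suc l..<k]"
  using assms upt_add_eq_append[of 0 l "k - l"] upt_conv_Cons[of l k]
  by (simp add: filter_id_conv)

lemma drop_col_eq_mat_of_cols:
  assumes "Z \<in> carrier_mat n k"
  shows "drop_col Z l = mat_of_cols n (map (col Z) (filter (\<lambda>j. j \<noteq> l) [0..<k]))"
proof -
  have "[col Z j. j \<leftarrow> [0..<k], j \<noteq> l] = map (col Z) (filter (\<lambda>j. j \<noteq> l) [0..<k])"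
    by (induction k) auto
  then show ?thesis using assms unfolding drop_col_def by simp
qed

lemma col_drop_col:
  assumes Z: "Z \<in> carrier_mat n k" and l: "l < k" and j: "j < k - 1"
  shows "col (drop_col Z l) j = col Z (skip_index l j)"
  using Z l j unfolding drop_col_eq_mat_of_cols[OF Z] filter_upt_neq[OF l] skip_index_def
  by (auto simp: nth_append)

lemma drop_col_carrier:
  assumes Z: "Z \<in> carrier_mat n k" and l: "l < k"
  shows "drop_col Z l \<in> carrier_mat n (k - 1)"
  using l unfolding drop_col_eq_mat_of_cols[OF Z] filter_upt_neq[OF l] by auto

lemma col_skip_mat:
  assumes "j < k - 1"
  shows "col (skip_mat k l) j = unit_vec k (skip_index l j)"
  using assms unfolding skip_mat_def by (intro eq_vecI) (auto simp: unit_vec_def)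

lemma mult_unit_vec:
  fixes A :: "'a :: semiring_1 mat"
  assumes A: "A \<in> carrier_mat n k" and l: "l < k"
  shows "A *\<^sub>v unit_vec k l = col A l"
  using A l by (intro eq_vecI) auto

lemma drop_col_eq_mult_skip_mat:
  assumes Z: "Z \<in> carrier_mat n k" and l: "l < k"
  shows "drop_col Z l = Z * skip_mat k l"
proof (rule mat_col_eqI)
  fix j assume "j < dim_col (Z * skip_mat k l)"
  then have j: "j < k - 1" unfolding skip_mat_def by simp
  then show "col (drop_col Z l) j = col (Z * skip_mat k l) j"
    using col_drop_col[OF Z l j] col_skip_mat[OF j] mult_unit_vec[OF Z skip_index_less] Z
    by (simp add: col_mult2[of _ n k _ "k - 1"] skip_mat_def)
qed (use drop_col_carrier[OF Z l] Z in \<open>auto simp: skip_mat_def\<close>)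

lemma skip_mat_mult_vec_skip_index:
  assumes c: "c \<in> carrier_vec (k - 1)" and j: "j < k - 1"
  shows "(skip_mat k l *\<^sub>v c) $ skip_index l j = c $ j"
proof -
  have inj: "skip_index l j = skip_index l i \<longleftrightarrow> j = i" for i unfolding skip_index_def by auto
  show ?thesis
    using skip_index_less[OF j] c j unfolding skip_mat_def by (simp add: scalar_prod_def inj of_bool_def[symmetric])
qed

lemma drop_col_kernel:
  fixes Z :: "real mat"
  assumes Z: "Z \<in> carrier_mat n k" and l: "l < k"
    and ker: "\<And>v. v \<in> carrier_vec k \<Longrightarrow> Z *\<^sub>v v = 0\<^sub>v n \<Longrightarrow> v = 0\<^sub>v k"
    and c: "c \<in> carrier_vec (k - 1)" and Ac: "drop_col Z l *\<^sub>v c = 0\<^sub>v n"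
  shows "c = 0\<^sub>v (k - 1)"
proof (rule eq_vecI)
  have S: "skip_mat k l \<in> carrier_mat k (k - 1)" unfolding skip_mat_def by simp
  have "Z *\<^sub>v (skip_mat k l *\<^sub>v c) = 0\<^sub>v n"
    using Ac drop_col_eq_mult_skip_mat[OF Z l] assoc_mult_mat_vec[OF Z S c] by simp
  then have Sc: "skip_mat k l *\<^sub>v c = 0\<^sub>v k" using ker S c by auto
  fix j assume "j < dim_vec (0\<^sub>v (k - 1) :: real vec)"
  then have j: "j < k - 1" by simp
  then show "c $ j = 0\<^sub>v (k - 1) $ j"
    using skip_mat_mult_vec_skip_index[OF c j, of l] skip_index_less[OF j, of l] Sc by simp
qed (use c in auto)

lemma transpose_mult_z_part:
  fixes Z :: "real mat"
  assumes Z: "Z \<in> carrier_mat n k" and l: "l < k"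
    and ker: "\<And>v. v \<in> carrier_vec k \<Longrightarrow> Z *\<^sub>v v = 0\<^sub>v n \<Longrightarrow> v = 0\<^sub>v k"
  shows "Z\<^sup>T *\<^sub>v z_part Z l = (col Z l \<bullet> z_part Z l) \<cdot>\<^sub>v unit_vec k l"
proof (rule eq_vecI)
  define A where "A = drop_col Z l"
  have A: "A \<in> carrier_mat n (k - 1)" unfolding A_def using drop_col_carrier[OF Z l] .
  have zl: "col Z l \<in> carrier_vec n" using Z l by auto
  have kerA: "c = 0\<^sub>v (k - 1)" if "c \<in> carrier_vec (k - 1)" "A *\<^sub>v c = 0\<^sub>v n" for c
    using drop_col_kernel[OF Z l ker that[unfolded A_def]] .
  have ATu: "A\<^sup>T *\<^sub>v z_part Z l = 0\<^sub>v (k - 1)"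
    unfolding z_part_def A_def[symmetric] using transpose_mult_annih_mat_vec[OF A zl kerA] .
  have orth: "col A j' \<bullet> z_part Z l = 0" if "j' < k - 1" for j'
  proof -
    have "col A j' \<bullet> z_part Z l = (A\<^sup>T *\<^sub>v z_part Z l) $ j'" using A that by simp
    then show ?thesis using ATu that by simp
  qed
  fix j assume "j < dim_vec ((col Z l \<bullet> z_part Z l) \<cdot>\<^sub>v unit_vec k l)"
  then have j: "j < k" by simp
  show "(Z\<^sup>T *\<^sub>v z_part Z l) $ j = ((col Z l \<bullet> z_part Z l) \<cdot>\<^sub>v unit_vec k l) $ j"
  proof (cases "j = l")
    case False
    define j' where "j' = (if j < l then j else j - 1)"
    have j': "j' < k - 1" "skip_index l j' = j"
      using False j l unfolding j'_def skip_index_def by auto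
    have "col Z j \<bullet> z_part Z l = 0"
      using orth[OF j'(1)] col_drop_col[OF Z l j'(1)] j'(2) unfolding A_def by simp
    then show ?thesis using Z j False by (simp add: unit_vec_def)
  qed (use Z j in simp)
qed (use Z in simp)

lemma z_part_in_col_space:
  fixes Z :: "real mat"
  assumes Z: "Z \<in> carrier_mat n k" and l: "l < k"
  obtains t where "t \<in> carrier_vec k" and "z_part Z l = Z *\<^sub>v t"
proof
  define A where "A = drop_col Z l"
  define S where "S = skip_mat k l"
  define c where "c = pi_hat A (col Z l)"
  have A: "A \<in> carrier_mat n (k - 1)" unfolding A_def using drop_col_carrier[OF Z l] .
  have S: "S \<in> carrier_mat k (k - 1)" unfolding S_def skip_mat_def by simp
  have c: "c \<in> carrier_vec (k - 1)" unfolding c_def using pi_hat_carrier[OF A] Z l by auto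
  show "unit_vec k l - S *\<^sub>v c \<in> carrier_vec k" using S c by simp
  have "z_part Z l = col Z l - A *\<^sub>v c"
    unfolding z_part_def A_def[symmetric] c_def using annih_mat_mult_vec[OF A] Z l by auto
  also have "\<dots> = Z *\<^sub>v unit_vec k l - Z *\<^sub>v (S *\<^sub>v c)"
    unfolding A_def S_def drop_col_eq_mult_skip_mat[OF Z l] mult_unit_vec[OF Z l]
    using assoc_mult_mat_vec[OF Z S[unfolded S_def] c] by simp
  also have "\<dots> = Z *\<^sub>v (unit_vec k l - S *\<^sub>v c)"
    using mult_minus_distrib_mat_vec[OF Z, of "unit_vec k l" "S *\<^sub>v c"] S c by simp
  finally show "z_part Z l = Z *\<^sub>v (unit_vec k l - S *\<^sub>v c)" .
qed

lemma z_part_scalar_prod: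
  fixes Z :: "real mat"
  assumes Z: "Z \<in> carrier_mat n k" and l: "l < k" and w: "w \<in> carrier_vec n"
    and ker: "\<And>v. v \<in> carrier_vec k \<Longrightarrow> Z *\<^sub>v v = 0\<^sub>v n \<Longrightarrow> v = 0\<^sub>v k"
  shows "z_part Z l \<bullet> w = pi_hat Z w $ l * (col Z l \<bullet> z_part Z l)"
proof -
  define u where "u = z_part Z l"
  define p where "p = pi_hat Z w"
  define r where "r = w - Z *\<^sub>v p"
  obtain t where t: "t \<in> carrier_vec k" and ut: "u = Z *\<^sub>v t"
    using z_part_in_col_space[OF Z l] unfolding u_def by blast
  have u: "u \<in> carrier_vec n" using ut Z t by simp
  have p: "p \<in> carrier_vec k" unfolding p_def using pi_hat_carrier[OF Z w] .
  have Zp: "Z *\<^sub>v p \<in> carrier_vec n" using Z p by simp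
  have r: "r \<in> carrier_vec n" unfolding r_def using w Zp by simp
  have w_split: "w = Z *\<^sub>v p + r" unfolding r_def using w Zp Z by (intro eq_vecI) auto
  have "u \<bullet> r = (Z\<^sup>T *\<^sub>v r) \<bullet> t"
    using transpose_vec_mult_scalar[OF Z t r] comm_scalar_prod[OF u r] ut by simp
  also have "\<dots> = 0"
    using transpose_mult_annih_mat_vec[OF Z w ker] t
    unfolding r_def p_def annih_mat_mult_vec[OF Z w] by simp
  finally have ur: "u \<bullet> r = 0" .
  have "u \<bullet> (Z *\<^sub>v p) = (Z\<^sup>T *\<^sub>v u) \<bullet> p"
    using transpose_vec_mult_scalar[OF Z p u] by simp
  also have "\<dots> = p $ l * (col Z l \<bullet> u)"
    using transpose_mult_z_part[OF Z l ker] p l unfolding u_def by simp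
  finally have "u \<bullet> (Z *\<^sub>v p) = p $ l * (col Z l \<bullet> u)" .
  then show ?thesis
    using ur w_split scalar_prod_add_distrib[OF u Zp r] unfolding u_def p_def by simp
qed

lemma scalar_prod_transpose_mult_vec:
  assumes Z: "Z \<in> carrier_mat n k" and p: "p \<in> carrier_vec k"
  shows "(Z\<^sup>T *\<^sub>v w) \<bullet> p = (\<Sum>l<k. (col Z l \<bullet> w) * p $ l)"
  using Z p unfolding scalar_prod_def[of "Z\<^sup>T *\<^sub>v w"] by (simp add: lessThan_atLeast0)

lemma sum_weight_eq_1:
  assumes Z: "Z \<in> carrier_mat n k" and x: "x \<in> carrier_vec n"
    and d: "x \<bullet> (proj_mat Z *\<^sub>v x) \<noteq> 0"
  shows "(\<Sum>l<k. weight Z x l) = 1"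
proof -
  have "(\<Sum>l<k. weight Z x l) = (Z\<^sup>T *\<^sub>v x) \<bullet> pi_hat Z x / (x \<bullet> (proj_mat Z *\<^sub>v x))"
    unfolding weight_def scalar_prod_transpose_mult_vec[OF Z pi_hat_carrier[OF Z x]] sum_divide_distrib
    by (simp add: mult.commute)
  then show ?thesis using d scalar_prod_proj_mat[OF Z x x] by simp
qed

lemma beta_2sls_eq_sum_weight_beta_star:
  fixes Z :: "real mat"
  assumes Z: "Z \<in> carrier_mat n k" and x: "x \<in> carrier_vec n" and y: "y \<in> carrier_vec n"
    and ker: "\<And>v. v \<in> carrier_vec k \<Longrightarrow> Z *\<^sub>v v = 0\<^sub>v n \<Longrightarrow> v = 0\<^sub>v k"
    and zx: "\<And>l. l < k \<Longrightarrow> col Z l \<bullet> x \<noteq> 0"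
  shows "beta_2sls Z x y = (\<Sum>l<k. weight Z x l * beta_star Z x y l)"
proof -
  have "(\<Sum>l<k. weight Z x l * beta_star Z x y l)
      = (\<Sum>l<k. (col Z l \<bullet> y) * pi_hat Z x $ l) / (x \<bullet> (proj_mat Z *\<^sub>v x))"
    unfolding sum_divide_distrib
    by (rule sum.cong) (use zx in \<open>auto simp: weight_def beta_star_def\<close>)
  also have "\<dots> = (Z\<^sup>T *\<^sub>v x) \<bullet> pi_hat Z y / (x \<bullet> (proj_mat Z *\<^sub>v x))"
    using scalar_prod_transpose_mult_vec[OF Z pi_hat_carrier[OF Z x]]
      scalar_prod_pi_hat_comm[OF Z x y ker] by simp
  also have "\<dots> = beta_2sls Z x y"
    unfolding beta_2sls_def using scalar_prod_proj_mat[OF Z x y] by simp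
  finally show ?thesis by simp
qed

lemma beta_2sls_eq_sum_weight_beta_l:
  fixes Z :: "real mat"
  assumes Z: "Z \<in> carrier_mat n k" and x: "x \<in> carrier_vec n" and y: "y \<in> carrier_vec n"
    and ker: "\<And>v. v \<in> carrier_vec k \<Longrightarrow> Z *\<^sub>v v = 0\<^sub>v n \<Longrightarrow> v = 0\<^sub>v k"
    and zpx: "\<And>l. l < k \<Longrightarrow> z_part Z l \<bullet> x \<noteq> 0"
  shows "beta_2sls Z x y = (\<Sum>l<k. weight Z x l * beta_l Z x y l)"
proof -
  have summand: "weight Z x l * beta_l Z x y l
      = (col Z l \<bullet> x) * pi_hat Z y $ l / (x \<bullet> (proj_mat Z *\<^sub>v x))" if l: "l < k" for l
    using zpx[OF l] z_part_scalar_prod[OF Z l x ker] z_part_scalar_prod[OF Z l y ker]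
    unfolding weight_def beta_l_def by simp
  have "(\<Sum>l<k. weight Z x l * beta_l Z x y l)
      = (\<Sum>l<k. (col Z l \<bullet> x) * pi_hat Z y $ l) / (x \<bullet> (proj_mat Z *\<^sub>v x))"
    unfolding sum_divide_distrib using summand by simp
  also have "\<dots> = beta_2sls Z x y"
    unfolding beta_2sls_def using scalar_prod_transpose_mult_vec[OF Z pi_hat_carrier[OF Z y]]
      scalar_prod_proj_mat[OF Z x y] by simp
  finally show ?thesis by simp
qed

theorem mainTheorem2:
  fixes n kz :: nat and Z :: "real mat" and x y :: "real vec"
  assumes "Z \<in> carrier_mat n kz"
    and "x \<in> carrier_vec n" and "y \<in> carrier_vec n"
    and "vec_space.rank n Z = kz"
    and "x \<bullet> (proj_mat Z *\<^sub>v x) \<noteq> 0"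
    and "\<And>l. l < kz \<Longrightarrow> col Z l \<bullet> x \<noteq> 0"
    and "\<And>l. l < kz \<Longrightarrow> z_part Z l \<bullet> x \<noteq> 0"
  shows "(\<Sum>l<kz. weight Z x l) = 1
    \<and> beta_2sls Z x y = (\<Sum>l<kz. weight Z x l * beta_l Z x y l)
    \<and> beta_2sls Z x y = (\<Sum>l<kz. weight Z x l * beta_star Z x y l)"
proof -
  have ker: "\<And>v. v \<in> carrier_vec kz \<Longrightarrow> Z *\<^sub>v v = 0\<^sub>v n \<Longrightarrow> v = 0\<^sub>v kz"
    using full_rank_mult_vec_eq_0[OF assms(1,4)] by blast
  show ?thesis
    using sum_weight_eq_1[OF assms(1,2,5)]
      beta_2sls_eq_sum_weight_beta_l[OF assms(1-3) ker assms(7)]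
      beta_2sls_eq_sum_weight_beta_star[OF assms(1-3) ker assms(6)] by blast
qed

end
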